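(* Let $G$ be a connected undirected graph with $n$ vertices and edge weights in $[1,W]$, weighted adjacency matrix $\mathbf{A}$ and degree matrix $\mathbf{D}$, and let $\nu_2$ be the second smallest eigenvalue of its normalised Laplacian $\mathbf{D}^{-1/2}(\mathbf{D}-\mathbf{A})\mathbf{D}^{-1/2}$. Let $\pi=\frac{\mathbf{D}\mathbf{1}}{\mathbf{1}^\top\mathbf{D}\mathbf{1}}$. Then for every vertex $u$, the vector $\sigma_u=\frac12\sum_{t=0}^\infty\left(\left(\frac12\mathbf{I}+\frac12\mathbf{A}\mathbf{D}^{-1}\right)^t\mathbf{1_u}-\pi\right)$ satisfies $\|\sigma_u\|_1=O(\nu_2^{-1}\log(nW))$.
   Context: $\mathbf{1_u}$ is the indicator vector of vertex $u$ and $\mathbf{1}$ the all-ones vector. *)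

theory Defs
  imports "Jordan_Normal_Form.Char_Poly" "HOL-Computational_Algebra.Polynomial"
begin

text \<open>A weighted undirected graph on vertex set {0..<n} is given by a weight function
  w :: nat => nat => real; w u v = 0 means "no edge".\<close>

definition weighted_graph :: "nat \<Rightarrow> (nat \<Rightarrow> nat \<Rightarrow> real) \<Rightarrow> real \<Rightarrow> bool" where
  "weighted_graph n w W \<longleftrightarrow>
     (\<forall>u<n. \<forall>v<n. w u v = w v u) \<and>
     (\<forall>u<n. w u u = 0) \<and>
     (\<forall>u<n. \<forall>v<n. w u v = 0 \<or> (1 \<le> w u v \<and> w u v \<le> W))"

definition graph_edges :: "nat \<Rightarrow> (nat \<Rightarrow> nat \<Rightarrow> real) \<Rightarrow> (nat \<times> nat) set" where
  "graph_edges n w = {(u, v). u < n \<and> v < n \<and> w u v \<noteq> 0}"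

definition connected_graph :: "nat \<Rightarrow> (nat \<Rightarrow> nat \<Rightarrow> real) \<Rightarrow> bool" where
  "connected_graph n w \<longleftrightarrow> (\<forall>u<n. \<forall>v<n. (u, v) \<in> (graph_edges n w)\<^sup>*)"

definition adj_mat :: "nat \<Rightarrow> (nat \<Rightarrow> nat \<Rightarrow> real) \<Rightarrow> real mat" where
  "adj_mat n w = mat n n (\<lambda>(i, j). w i j)"

definition wdeg :: "nat \<Rightarrow> (nat \<Rightarrow> nat \<Rightarrow> real) \<Rightarrow> nat \<Rightarrow> real" where
  "wdeg n w i = (\<Sum>j<n. w i j)"

definition deg_mat :: "nat \<Rightarrow> (nat \<Rightarrow> nat \<Rightarrow> real) \<Rightarrow> real mat" where
  "deg_mat n w = mat_diag n (wdeg n w)"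

definition deg_inv_sqrt_mat :: "nat \<Rightarrow> (nat \<Rightarrow> nat \<Rightarrow> real) \<Rightarrow> real mat" where
  "deg_inv_sqrt_mat n w = mat_diag n (\<lambda>i. 1 / sqrt (wdeg n w i))"

definition deg_inv_mat :: "nat \<Rightarrow> (nat \<Rightarrow> nat \<Rightarrow> real) \<Rightarrow> real mat" where
  "deg_inv_mat n w = mat_diag n (\<lambda>i. 1 / wdeg n w i)"

definition norm_laplacian :: "nat \<Rightarrow> (nat \<Rightarrow> nat \<Rightarrow> real) \<Rightarrow> real mat" where
  "norm_laplacian n w =
     deg_inv_sqrt_mat n w * (deg_mat n w - adj_mat n w) * deg_inv_sqrt_mat n w"

definition sorted_eigenvalues :: "real mat \<Rightarrow> real list" where
  "sorted_eigenvalues M = sorted_list_of_multiset (proots (char_poly M))"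

text \<open>Second smallest eigenvalue (index 1 in the 0-based sorted list).\<close>
definition second_smallest_eigenvalue :: "real mat \<Rightarrow> real" where
  "second_smallest_eigenvalue M = sorted_eigenvalues M ! 1"

definition lazy_walk_mat :: "nat \<Rightarrow> (nat \<Rightarrow> nat \<Rightarrow> real) \<Rightarrow> real mat" where
  "lazy_walk_mat n w =
     (1/2) \<cdot>\<^sub>m (1\<^sub>m n) + (1/2) \<cdot>\<^sub>m (adj_mat n w * deg_inv_mat n w)"

definition stat_dist :: "nat \<Rightarrow> (nat \<Rightarrow> nat \<Rightarrow> real) \<Rightarrow> real vec" where
  "stat_dist n w = vec n (\<lambda>v. wdeg n w v / (\<Sum>x<n. wdeg n w x))"

definition sigma_term :: "nat \<Rightarrow> (nat \<Rightarrow> nat \<Rightarrow> real) \<Rightarrow> nat \<Rightarrow> nat \<Rightarrow> real vec" where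
  "sigma_term n w u t = (lazy_walk_mat n w ^\<^sub>m t) *\<^sub>v unit_vec n u - stat_dist n w"

definition sigma_vec :: "nat \<Rightarrow> (nat \<Rightarrow> nat \<Rightarrow> real) \<Rightarrow> nat \<Rightarrow> real vec" where
  "sigma_vec n w u = vec n (\<lambda>v. (1/2) * (\<Sum>t. sigma_term n w u t $ v))"

definition norm1_vec :: "real vec \<Rightarrow> real" where
  "norm1_vec x = (\<Sum>i<dim_vec x. \<bar>x $ i\<bar>)"

end

theory Submission
  imports Defs "Jordan_Normal_Form.Schur_Decomposition"
begin

text \<open>
  The normalised Laplacian \<open>L\<close> is real symmetric, so it has an orthonormal eigenbasis
  \<open>\<phi>\<^sub>0, \<dots>, \<phi>\<^sub>n\<^sub>-\<^sub>1\<close> with eigenvalues \<open>0 = \<nu>\<^sub>0 < \<nu>\<^sub>1 \<le> \<dots> \<le> 2\<close>; its kernel is spanned by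
  \<open>D\<^sup>1\<^sup>/\<^sup>2 \<one>\<close> because the graph is connected. (Eigenvalues are indexed from 0 here, so the
  paper's \<open>\<nu>\<^sub>2\<close> is \<open>nu 1\<close>.) The lazy walk matrix is \<open>D\<^sup>1\<^sup>/\<^sup>2 (I - L/2) D\<^sup>-\<^sup>1\<^sup>/\<^sup>2\<close>, so the
  \<open>\<phi>\<^sub>0\<close>-component of \<open>M\<^sup>t \<one>\<^sub>u\<close> is exactly \<open>\<pi>\<close> and every entry of \<open>M\<^sup>t \<one>\<^sub>u - \<pi>\<close> is at
  most \<open>n\<^sup>2 W (1 - \<nu>\<^sub>1/2)\<^sup>t\<close>. Being a difference of two probability vectors, each term
  also has \<open>\<ell>\<^sub>1\<close>-norm at most 2. Using the bound 2 for the first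
  \<open>T = \<lceil>2 ln (n\<^sup>3 W) / \<nu>\<^sub>1\<rceil>\<close> terms and the geometric bound for the rest gives
  \<open>\<parallel>\<sigma>\<^sub>u\<parallel>\<^sub>1 \<le> 12 ln (n W) / \<nu>\<^sub>1\<close>.
\<close>

section \<open>Orthonormal diagonalisation of real symmetric matrices\<close>

definition orthonormal_mat :: "nat \<Rightarrow> 'a::comm_ring_1 mat \<Rightarrow> bool" where
  "orthonormal_mat n P \<longleftrightarrow>
     P \<in> carrier_mat n n \<and> transpose_mat P * P = 1\<^sub>m n \<and> P * transpose_mat P = 1\<^sub>m n"

lemma symmetric_matD:
  "A \<in> carrier_mat n n \<Longrightarrow> transpose_mat A = A \<Longrightarrow> i < n \<Longrightarrow> j < n \<Longrightarrow> A $$ (i, j) = A $$ (j, i)"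
  by (metis carrier_matD index_transpose_mat(1))

lemma real_symmetric_char_poly_root_real:
  fixes A :: "real mat"
  assumes A: "A \<in> carrier_mat n n" and sym: "transpose_mat A = A"
    and root: "poly (char_poly (map_mat complex_of_real A)) z = 0"
  shows "Im z = 0"
proof -
  define B where "B = map_mat complex_of_real A"
  have B: "B \<in> carrier_mat n n" using A unfolding B_def by auto
  have "eigenvalue B z" using root eigenvalue_root_char_poly[OF B] unfolding B_def by auto
  then obtain v where "eigenvector B v z" unfolding eigenvalue_def by auto
  hence v: "v \<in> carrier_vec n" and v0: "v \<noteq> 0\<^sub>v n" and Bv: "B *\<^sub>v v = z \<cdot>\<^sub>v v"
    unfolding eigenvector_def using B by auto
  have Bv_index: "(B *\<^sub>v v) $ i = (\<Sum>j<n. complex_of_real (A $$ (i, j)) * v $ j)" if "i < n" for i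
    using that A v B unfolding B_def
    by (subst index_mult_mat_vec, force, unfold scalar_prod_def, auto simp: atLeast0LessThan intro!: sum.cong)
  \<comment> \<open>The Hermitian form \<open>s = v\<^sup>* B v\<close> is both real and equal to \<open>z |v|\<^sup>2\<close>.\<close>
  define s where "s = (\<Sum>i<n. cnj (v $ i) * (B *\<^sub>v v) $ i)"
  define r where "r = (\<Sum>i<n. (cmod (v $ i))^2)"
  have s_eigen: "s = z * complex_of_real r"
  proof -
    have "s = (\<Sum>i<n. cnj (v $ i) * (z * v $ i))"
      unfolding s_def Bv using v by (auto intro!: sum.cong)
    also have "\<dots> = z * (\<Sum>i<n. cnj (v $ i) * v $ i)"
      by (simp add: sum_distrib_left algebra_simps)
    also have "(\<Sum>i<n. cnj (v $ i) * v $ i) = complex_of_real r"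
      unfolding r_def of_real_sum
      by (intro sum.cong refl, metis complex_norm_square mult.commute of_real_power)
    finally show ?thesis .
  qed
  have s_double_sum: "s = (\<Sum>i<n. \<Sum>j<n. complex_of_real (A $$ (i, j)) * (cnj (v $ i) * v $ j))"
    unfolding s_def by (intro sum.cong refl, simp add: Bv_index sum_distrib_left algebra_simps)
  have "cnj s = (\<Sum>i<n. \<Sum>j<n. complex_of_real (A $$ (i, j)) * (v $ i * cnj (v $ j)))"
    unfolding s_double_sum by (simp add: cnj_sum)
  also have "\<dots> = (\<Sum>j<n. \<Sum>i<n. complex_of_real (A $$ (i, j)) * (v $ i * cnj (v $ j)))"
    by (rule sum.swap)
  also have "\<dots> = s"
    unfolding s_double_sum by (intro sum.cong refl, simp add: symmetric_matD[OF A sym] mult.commute)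
  finally have "Im s = 0" by (metis cnj.simps(2) neg_equal_zero)
  hence "Im z * r = 0" unfolding s_eigen by simp
  moreover have "r > 0"
  proof -
    from v0 v obtain i where i: "i < n" "v $ i \<noteq> 0"
      by (metis eq_vecI carrier_vecD index_zero_vec(1,2))
    have "(cmod (v $ i))^2 \<le> r" unfolding r_def
      by (rule member_le_sum[of i "{..<n}" "\<lambda>i. (cmod (v $ i))^2"]) (use i in auto)
    moreover have "(cmod (v $ i))^2 > 0" using i by simp
    ultimately show ?thesis by linarith
  qed
  ultimately show ?thesis by simp
qed

lemma real_symmetric_char_poly_splits:
  fixes A :: "real mat"
  assumes A: "A \<in> carrier_mat n n" and sym: "transpose_mat A = A"
  shows "\<exists>rs. char_poly A = (\<Prod>r\<leftarrow>rs. [:-r, 1:]) \<and> length rs = n"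
proof -
  interpret complex_hom: map_poly_inj_idom_hom complex_of_real ..
  define B where "B = map_mat complex_of_real A"
  have B: "B \<in> carrier_mat n n" using A unfolding B_def by auto
  from char_poly_factorized[OF B] obtain zs where cp: "char_poly B = (\<Prod>z\<leftarrow>zs. [:- z, 1:])"
    and len: "length zs = n" by auto
  have real: "Im z = 0" if "z \<in> set zs" for z
  proof -
    have "poly (char_poly B) z = 0" unfolding cp using that by (induct zs) auto
    thus ?thesis using real_symmetric_char_poly_root_real[OF A sym] unfolding B_def by auto
  qed
  define rs where "rs = map Re zs"
  have zs: "zs = map complex_of_real rs" unfolding rs_def using real
    by (induct zs) (auto simp: complex_eq_iff)
  have "map_poly complex_of_real (char_poly A) = char_poly B"
    unfolding B_def by (rule of_real_hom.char_poly_hom[OF A, symmetric])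
  also have "\<dots> = map_poly complex_of_real (\<Prod>r\<leftarrow>rs. [:-r, 1:])"
    unfolding cp zs complex_hom.hom_prod_list by (simp add: o_def)
  finally have "char_poly A = (\<Prod>r\<leftarrow>rs. [:-r, 1:])" by simp
  thus ?thesis using len by (metis length_map rs_def)
qed

lemma proots_prod_list_linear: "proots (\<Prod>r\<leftarrow>rs. [:-r, 1:]) = mset (rs :: 'a::idom list)"
proof (induct rs)
  case (Cons r rs)
  have "(\<Prod>r\<leftarrow>rs. [:-r, 1:]) \<noteq> (0 :: 'a poly)" by (auto simp: prod_list_zero_iff)
  hence "proots ([:-r, 1:] * (\<Prod>r\<leftarrow>rs. [:-r, 1:])) = proots [:-r, 1:] + mset rs"
    using Cons by (subst proots_mult) auto
  also have "proots [:-r, 1:] = {#r#}" using proots_linear_factor[of "-r"] by simp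
  finally show ?case by simp
qed simp

lemma sorted_eigenvalues_real_symmetric:
  fixes A :: "real mat"
  assumes A: "A \<in> carrier_mat n n" and sym: "transpose_mat A = A"
  shows "char_poly A = (\<Prod>e\<leftarrow>sorted_eigenvalues A. [:-e, 1:])" "length (sorted_eigenvalues A) = n"
proof -
  from real_symmetric_char_poly_splits[OF A sym] obtain rs where
    cp: "char_poly A = (\<Prod>r\<leftarrow>rs. [:-r, 1:])" and len: "length rs = n" by auto
  have es: "sorted_eigenvalues A = sort rs"
    unfolding sorted_eigenvalues_def cp proots_prod_list_linear by simp
  have "(\<Prod>r\<leftarrow>rs. [:-r, 1:]) = (\<Prod>e\<leftarrow>sort rs. [:-e, 1:])"
    unfolding prod_mset_prod_list[symmetric] by simp
  thus "char_poly A = (\<Prod>e\<leftarrow>sorted_eigenvalues A. [:-e, 1:])" unfolding es cp .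
  show "length (sorted_eigenvalues A) = n" using len es by simp
qed

lemma orthonormal_matD:
  assumes "orthonormal_mat n P"
  shows "P \<in> carrier_mat n n" "transpose_mat P * P = 1\<^sub>m n" "P * transpose_mat P = 1\<^sub>m n"
  using assms unfolding orthonormal_mat_def by auto

lemma orthonormal_mat_mult:
  assumes P: "orthonormal_mat n P" and Q: "orthonormal_mat n Q"
  shows "orthonormal_mat n (P * Q)"
proof -
  note P = orthonormal_matD[OF P] and Q = orthonormal_matD[OF Q]
  have tr: "transpose_mat (P * Q) = transpose_mat Q * transpose_mat P"
    using P Q by (simp add: transpose_mult[of _ n n])
  have "transpose_mat (P * Q) * (P * Q) = transpose_mat Q * (transpose_mat P * (P * Q))"
    unfolding tr by (rule assoc_mult_mat) (use P Q in auto)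
  also have "transpose_mat P * (P * Q) = transpose_mat P * P * Q"
    by (rule assoc_mult_mat[symmetric]) (use P Q in auto)
  finally have "transpose_mat (P * Q) * (P * Q) = 1\<^sub>m n" using P Q by simp
  moreover have "P * Q * transpose_mat (P * Q) = P * (Q * (transpose_mat Q * transpose_mat P))"
    unfolding tr by (rule assoc_mult_mat) (use P Q in auto)
  moreover have "Q * (transpose_mat Q * transpose_mat P) = Q * transpose_mat Q * transpose_mat P"
    by (rule assoc_mult_mat[symmetric]) (use P Q in auto)
  ultimately show ?thesis using P Q unfolding orthonormal_mat_def by simp
qed

lemma orthonormal_mat_four_block:
  assumes Q: "orthonormal_mat m Q"
  shows "orthonormal_mat (Suc m) (four_block_mat (1\<^sub>m 1) (0\<^sub>m 1 m) (0\<^sub>m m 1) Q)"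
proof -
  note Q = orthonormal_matD[OF Q]
  define F where "F = four_block_mat (1\<^sub>m 1) (0\<^sub>m 1 m) (0\<^sub>m m 1) Q"
  have tr: "transpose_mat F = four_block_mat (1\<^sub>m 1) (0\<^sub>m 1 m) (0\<^sub>m m 1) (transpose_mat Q)"
    unfolding F_def using Q by (subst transpose_four_block_mat) auto
  have "transpose_mat F * F = 1\<^sub>m (Suc m)" "F * transpose_mat F = 1\<^sub>m (Suc m)"
    unfolding tr unfolding F_def using Q by (subst mult_four_block_mat; auto)+
  moreover have "F \<in> carrier_mat (Suc m) (Suc m)" unfolding F_def using Q by auto
  ultimately show ?thesis unfolding orthonormal_mat_def F_def by simp
qed

lemma corthogonal_basis_with_first_vec:
  fixes v :: "'a :: conjugatable_ordered_field vec"
  assumes v: "v \<in> carrier_vec n" and v0: "v \<noteq> 0\<^sub>v n"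
  shows "\<exists>ws. set ws \<subseteq> carrier_vec n \<and> corthogonal ws \<and> length ws = n \<and> ws ! 0 = v"
proof -
  interpret cof_vec_space n "TYPE('a)" .
  define b where "b = basis_completion v"
  from basis_completion[OF v v0, folded b_def]
  have dist_b: "distinct b" and indep: "\<not> lin_dep (set b)" and b: "set b \<subseteq> carrier_vec n"
    and hd_b: "hd b = v" and len_b: "length b = n" by auto
  from v0 v have "n \<noteq> 0" by auto
  with hd_b len_b obtain vs where bv: "b = v # vs" by (cases b) auto
  define ws where "ws = gram_schmidt n b"
  from gram_schmidt_result[OF b dist_b indep refl, folded ws_def]
  have ws: "set ws \<subseteq> carrier_vec n" "corthogonal ws" "length ws = n" by (auto simp: len_b)
  from gram_schmidt_hd[OF v, of vs, folded bv] have "hd ws = v" unfolding ws_def .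
  hence "ws ! 0 = v" using ws(3) \<open>n \<noteq> 0\<close> by (cases ws) auto
  with ws show ?thesis by blast
qed

lemma orthonormal_mat_with_first_col:
  fixes v :: "real vec"
  assumes v: "v \<in> carrier_vec n" and v0: "v \<noteq> 0\<^sub>v n"
  shows "\<exists>W. orthonormal_mat n W \<and> col W 0 = (1 / sqrt (v \<bullet> v)) \<cdot>\<^sub>v v"
proof -
  from corthogonal_basis_with_first_vec[OF v v0] obtain ws where
    ws: "set ws \<subseteq> carrier_vec n" "corthogonal ws" "length ws = n" and ws0: "ws ! 0 = v" by blast
  have ws_carrier: "ws ! i \<in> carrier_vec n" if "i < n" for i using ws that by auto
  have ws_orth: "ws ! i \<bullet> ws ! j = 0 \<longleftrightarrow> i \<noteq> j" if "i < n" "j < n" for i j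
    using corthogonalD[OF ws(2)] that ws(3) by auto
  have ws_pos: "ws ! i \<bullet> ws ! i > 0" if "i < n" for i
    using ws_orth[OF that that] conjugate_square_ge_0_vec[of "ws ! i"] by simp
  define us where "us = map (\<lambda>w. (1 / sqrt (w \<bullet> w)) \<cdot>\<^sub>v w) ws"
  have len_us: "length us = n" unfolding us_def using ws by auto
  have us: "us ! i = (1 / sqrt (ws ! i \<bullet> ws ! i)) \<cdot>\<^sub>v ws ! i" if "i < n" for i
    unfolding us_def using that ws(3) by auto
  have us_carrier: "us ! i \<in> carrier_vec n" if "i < n" for i using us[OF that] ws_carrier[OF that] by auto
  have us_orthonormal: "us ! i \<bullet> us ! j = (if i = j then 1 else 0)" if ij: "i < n" "j < n" for i j
  proof -
    have "us ! i \<bullet> us ! j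
        = (1 / sqrt (ws ! i \<bullet> ws ! i)) * (1 / sqrt (ws ! j \<bullet> ws ! j)) * (ws ! i \<bullet> ws ! j)"
      unfolding us[OF ij(1)] us[OF ij(2)] using ws_carrier[OF ij(1)] ws_carrier[OF ij(2)] by simp
    thus ?thesis using ws_orth[OF ij] ws_pos[OF ij(1)]
      by (cases "i = j") (auto simp: real_sqrt_mult[symmetric])
  qed
  define W where "W = mat_of_cols n us"
  have W: "W \<in> carrier_mat n n" unfolding W_def using len_us by (metis mat_of_cols_carrier(1))
  have col_W: "col W i = us ! i" if "i < n" for i unfolding W_def using that len_us us_carrier by auto
  have WtW: "transpose_mat W * W = 1\<^sub>m n"
    by (rule eq_matI) (use W in \<open>auto simp: col_W us_orthonormal\<close>)
  have "W * transpose_mat W = 1\<^sub>m n"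
    by (rule mat_mult_left_right_inverse[OF _ W WtW]) (use W in auto)
  moreover have "n \<noteq> 0" using v v0 by auto
  hence "col W 0 = (1 / sqrt (v \<bullet> v)) \<cdot>\<^sub>v v" using col_W[of 0] us[of 0] ws0 by simp
  ultimately show ?thesis using W WtW unfolding orthonormal_mat_def by blast
qed

lemma real_eigenvalue_orthonormal_mat:
  fixes A :: "real mat"
  assumes A: "A \<in> carrier_mat n n" and e: "eigenvalue A e"
  shows "\<exists>W. orthonormal_mat n W \<and> A *\<^sub>v col W 0 = e \<cdot>\<^sub>v col W 0"
proof -
  from e obtain v where "eigenvector A v e" unfolding eigenvalue_def by auto
  hence v: "v \<in> carrier_vec n" "v \<noteq> 0\<^sub>v n" and Av: "A *\<^sub>v v = e \<cdot>\<^sub>v v"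
    unfolding eigenvector_def using A by auto
  from orthonormal_mat_with_first_col[OF v] obtain W where
    W: "orthonormal_mat n W" and W0: "col W 0 = (1 / sqrt (v \<bullet> v)) \<cdot>\<^sub>v v" by blast
  have "A *\<^sub>v col W 0 = e \<cdot>\<^sub>v col W 0"
    unfolding W0 using A v Av by (simp add: mult_mat_vec smult_smult_assoc mult.commute)
  with W show ?thesis by blast
qed

lemma orthonormal_mat_col_inner:
  assumes "orthonormal_mat n W" "i < n" "j < n"
  shows "col W i \<bullet> col W j = (if i = j then 1 else 0)"
proof -
  have "(transpose_mat W * W) $$ (i, j) = col W i \<bullet> col W j"
    using orthonormal_matD(1)[OF assms(1)] assms(2,3) by simp
  thus ?thesis using orthonormal_matD(2)[OF assms(1)] assms(2,3) by simp
qed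

lemma real_symmetric_deflation:
  fixes A W :: "real mat"
  assumes A: "A \<in> carrier_mat (Suc m) (Suc m)" and sym: "transpose_mat A = A"
    and W: "orthonormal_mat (Suc m) W" and eig: "A *\<^sub>v col W 0 = e \<cdot>\<^sub>v col W 0"
  shows "\<exists>A'. A' \<in> carrier_mat m m \<and> transpose_mat A' = A' \<and>
    transpose_mat W * A * W = four_block_mat (mat 1 1 (\<lambda>_. e)) (0\<^sub>m 1 m) (0\<^sub>m m 1) A'"
proof -
  note W_carrier = orthonormal_matD(1)[OF W]
  define B where "B = transpose_mat W * A * W"
  have B: "B \<in> carrier_mat (Suc m) (Suc m)" unfolding B_def using W_carrier A by auto
  have "transpose_mat B = transpose_mat W * transpose_mat (transpose_mat W * A)"
    unfolding B_def by (rule transpose_mult) (use W_carrier A in auto)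
  also have "\<dots> = transpose_mat W * (transpose_mat A * W)"
    by (subst transpose_mult) (use W_carrier A in auto)
  also have "\<dots> = B" unfolding B_def sym using W_carrier A by simp
  finally have B_sym: "B $$ (i, j) = B $$ (j, i)" if "i < Suc m" "j < Suc m" for i j
    using symmetric_matD[OF B] that by simp
  have B_col0: "B $$ (i, 0) = (if i = 0 then e else 0)" if i: "i < Suc m" for i
  proof -
    have "B = transpose_mat W * (A * W)" unfolding B_def using W_carrier A by auto
    hence "B $$ (i, 0) = row (transpose_mat W) i \<bullet> col (A * W) 0"
      by (simp only:) (rule index_mult_mat(1), use i W_carrier A in auto)
    also have "row (transpose_mat W) i = col W i" using i W_carrier by simp
    also have "col (A * W) 0 = A *\<^sub>v col W 0" by (rule col_mult2) (use W_carrier A in auto)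
    also have "col W i \<bullet> (A *\<^sub>v col W 0) = e * (col W i \<bullet> col W 0)"
      unfolding eig using i W_carrier by simp
    finally show ?thesis using orthonormal_mat_col_inner[OF W i] by simp
  qed
  define A' where "A' = mat m m (\<lambda>(i, j). B $$ (Suc i, Suc j))"
  have "B = four_block_mat (mat 1 1 (\<lambda>_. e)) (0\<^sub>m 1 m) (0\<^sub>m m 1) A'"
  proof (rule eq_matI)
    fix i j assume "i < dim_row (four_block_mat (mat 1 1 (\<lambda>_. e)) (0\<^sub>m 1 m) (0\<^sub>m m 1) A')"
      and "j < dim_col (four_block_mat (mat 1 1 (\<lambda>_. e)) (0\<^sub>m 1 m) (0\<^sub>m m 1) A')"
    hence i: "i < Suc m" and j: "j < Suc m" by (auto simp: A'_def)
    show "B $$ (i, j) = four_block_mat (mat 1 1 (\<lambda>_. e)) (0\<^sub>m 1 m) (0\<^sub>m m 1) A' $$ (i, j)"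
    proof (cases "i = 0 \<or> j = 0")
      case True
      thus ?thesis using B_col0[OF i] B_col0[OF j] B_sym[OF i j] i j by (auto simp: A'_def)
    next
      case False
      then obtain i' j' where "i = Suc i'" "j = Suc j'" by (cases i; cases j) auto
      thus ?thesis using i j by (auto simp: A'_def)
    qed
  qed (use B in \<open>auto simp: A'_def\<close>)
  moreover have "transpose_mat A' = A'" by (rule eq_matI) (auto simp: A'_def B_sym)
  ultimately show ?thesis unfolding B_def by (intro exI[of _ A']) (simp add: A'_def)
qed

lemma char_poly_four_block_scalar:
  assumes "A \<in> carrier_mat m m"
  shows "char_poly (four_block_mat (mat 1 1 (\<lambda>_. e)) (0\<^sub>m 1 m) (0\<^sub>m m 1) A)
    = [:-e, 1:] * char_poly A"
  by (subst char_poly_four_block_zeros_col[OF _ _ assms]) (auto simp: char_poly_defs det_def sign_def)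

theorem real_symmetric_orthonormal_diagonalization:
  fixes A :: "real mat"
  assumes "A \<in> carrier_mat n n" "transpose_mat A = A" "char_poly A = (\<Prod>e\<leftarrow>es. [:-e, 1:])"
  shows "\<exists>P. orthonormal_mat n P \<and> transpose_mat P * A * P = mat_diag n (\<lambda>i. es ! i)"
  using assms
proof (induct es arbitrary: n A)
  case Nil
  with degree_monic_char_poly[of A n] have "n = 0" by auto
  thus ?case using Nil(1)
    by (intro exI[of _ "1\<^sub>m 0"]) (auto simp: orthonormal_mat_def mat_diag_def intro!: eq_matI)
next
  case (Cons e es n A)
  hence A: "A \<in> carrier_mat n n" and sym: "transpose_mat A = A"
    and cp: "char_poly A = [:-e, 1:] * (\<Prod>e\<leftarrow>es. [:-e, 1:])" by auto
  have "monic (\<Prod>e\<leftarrow>es. [:-e, 1:])" by (rule monic_prod_list) auto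
  hence "degree (char_poly A) = Suc (degree (\<Prod>e\<leftarrow>es. [:-e, 1:]))"
    unfolding cp by (subst degree_mult_eq) auto
  with degree_monic_char_poly[OF A] obtain m where n: "n = Suc m" by (cases n) auto
  have "eigenvalue A e" unfolding eigenvalue_root_char_poly[OF A] cp by simp
  from real_eigenvalue_orthonormal_mat[OF A this] obtain W where
    W: "orthonormal_mat n W" and eig: "A *\<^sub>v col W 0 = e \<cdot>\<^sub>v col W 0" by blast
  from real_symmetric_deflation[OF A[unfolded n] sym W[unfolded n] eig] obtain A' where
    A': "A' \<in> carrier_mat m m" "transpose_mat A' = A'"
    and block: "transpose_mat W * A * W = four_block_mat (mat 1 1 (\<lambda>_. e)) (0\<^sub>m 1 m) (0\<^sub>m m 1) A'"
    by blast
  note W_carrier = orthonormal_matD[OF W]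
  have "similar_mat (transpose_mat W * A * W) A"
    by (rule similar_matI[of _ _ "transpose_mat W" W n]) (use A W_carrier in auto)
  from char_poly_similar[OF this] cp
  have "[:-e, 1:] * char_poly A' = [:-e, 1:] * (\<Prod>e\<leftarrow>es. [:-e, 1:])"
    unfolding block char_poly_four_block_scalar[OF A'(1)] by simp
  hence "char_poly A' = (\<Prod>e\<leftarrow>es. [:-e, 1:])" by (metis mult_cancel_left pCons_eq_0_iff zero_neq_one)
  from Cons(1)[OF A' this] obtain Q where
    Q: "orthonormal_mat m Q" and QA'Q: "transpose_mat Q * A' * Q = mat_diag m (\<lambda>i. es ! i)" by blast
  define F where "F = four_block_mat (1\<^sub>m 1) (0\<^sub>m 1 m) (0\<^sub>m m 1) Q"
  have F: "orthonormal_mat n F" unfolding F_def n by (rule orthonormal_mat_four_block[OF Q])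
  note F_carrier = orthonormal_matD(1)[OF F] and Q_carrier = orthonormal_matD(1)[OF Q]
  have "transpose_mat (W * F) * A * (W * F) = transpose_mat F * (transpose_mat W * A * W) * F"
    using W_carrier F_carrier A by (simp add: transpose_mult[of _ n n] assoc_mult_mat[of _ n n _ n _ n])
  also have "\<dots> = four_block_mat (mat 1 1 (\<lambda>_. e)) (0\<^sub>m 1 m) (0\<^sub>m m 1) (transpose_mat Q * A' * Q)"
    unfolding block F_def using Q_carrier A'
    by (subst transpose_four_block_mat, auto, (subst mult_four_block_mat, auto)+)
  also have "\<dots> = mat_diag n (\<lambda>i. (e # es) ! i)"
    unfolding QA'Q n by (rule eq_matI) (auto simp: mat_diag_def less_Suc_eq_0_disj split: if_splits)
  finally show ?case using orthonormal_mat_mult[OF W F] by blast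
qed

corollary real_symmetric_eigenbasis:
  fixes A :: "real mat"
  assumes A: "A \<in> carrier_mat n n" and sym: "transpose_mat A = A"
  shows "\<exists>P. orthonormal_mat n P \<and> A * P = P * mat_diag n (\<lambda>i. sorted_eigenvalues A ! i)"
proof -
  from real_symmetric_orthonormal_diagonalization[OF A sym sorted_eigenvalues_real_symmetric(1)[OF A sym]]
  obtain P where P: "orthonormal_mat n P"
    and diag: "transpose_mat P * A * P = mat_diag n (\<lambda>i. sorted_eigenvalues A ! i)" by blast
  note P_carrier = orthonormal_matD[OF P]
  have "P * (transpose_mat P * A * P) = P * (transpose_mat P * (A * P))"
    using P_carrier A by (simp add: assoc_mult_mat[of _ n n _ n _ n])
  also have "\<dots> = P * transpose_mat P * (A * P)"
    by (rule assoc_mult_mat[symmetric]) (use P_carrier A in auto)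
  also have "\<dots> = A * P" using P_carrier A by simp
  finally show ?thesis using P unfolding diag by metis
qed

lemma pow_mat_Suc_left:
  assumes A: "(A :: 'a :: semiring_1 mat) \<in> carrier_mat n n"
  shows "A ^\<^sub>m Suc k = A * A ^\<^sub>m k"
proof (induct k)
  case (Suc k)
  have "A ^\<^sub>m Suc (Suc k) = A * A ^\<^sub>m k * A" using Suc by simp
  also have "\<dots> = A * (A ^\<^sub>m k * A)" using A by (simp add: assoc_mult_mat[of _ n n _ n _ n])
  finally show ?case by simp
qed (use A in simp)

section \<open>Geometric tail estimates\<close>

lemma suminf_le_split_geometric:
  fixes a :: "nat \<Rightarrow> real"
  assumes a: "summable a" and a_le: "\<And>t. a t \<le> B" and a_geometric: "\<And>t. a t \<le> K * r ^ t"
    and r: "0 \<le> r" "r < 1"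
  shows "suminf a \<le> B * real T + K * r ^ T / (1 - r)"
proof -
  have geometric: "summable (\<lambda>t. r ^ t)" using r by (simp add: summable_geometric)
  have "suminf a = (\<Sum>t. a (t + T)) + (\<Sum>t<T. a t)" by (rule suminf_split_initial_segment[OF a])
  also have "(\<Sum>t<T. a t) \<le> (\<Sum>t<T. B)" by (rule sum_mono, rule a_le)
  also have "(\<Sum>t. a (t + T)) \<le> (\<Sum>t. K * r ^ T * r ^ t)"
  proof (rule suminf_le)
    show "a (t + T) \<le> K * r ^ T * r ^ t" for t using a_geometric[of "t + T"] by (simp add: power_add mult_ac)
  qed (use summable_ignore_initial_segment[OF a] summable_mult[OF geometric] in auto)
  also have "(\<Sum>t. K * r ^ T * r ^ t) = K * r ^ T * (1 / (1 - r))"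
    using suminf_mult[OF geometric] suminf_geometric[of r] r by simp
  finally show ?thesis by (simp add: algebra_simps)
qed

lemma contraction_threshold:
  fixes \<nu> K :: real
  assumes \<nu>: "0 < \<nu>" "\<nu> \<le> 2" and K: "1 \<le> K"
  shows "K * (1 - \<nu> / 2) ^ nat \<lceil>2 * ln K / \<nu>\<rceil> \<le> 1"
proof -
  define T where "T = nat \<lceil>2 * ln K / \<nu>\<rceil>"
  have "2 * ln K / \<nu> \<le> real T" unfolding T_def by linarith
  have "(1 - \<nu> / 2) ^ T \<le> exp (- \<nu> / 2) ^ T"
    using exp_ge_add_one_self[of "- \<nu> / 2"] \<nu> by (intro power_mono) auto
  also have "\<dots> = exp (- (\<nu> / 2 * real T))" by (subst exp_of_nat_mult[symmetric]) (simp add: algebra_simps)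
  also have "\<dots> \<le> exp (- ln K)" using \<open>2 * ln K / \<nu> \<le> real T\<close> \<nu> by (simp add: field_simps)
  also have "\<dots> = 1 / K" using K by (simp add: exp_minus inverse_eq_divide)
  finally show ?thesis using K unfolding T_def by (simp add: field_simps)
qed

section \<open>The normalised Laplacian of a connected weighted graph\<close>

locale connected_weighted_graph =
  fixes n :: nat and w :: "nat \<Rightarrow> nat \<Rightarrow> real" and W :: real
  assumes two_le_n: "2 \<le> n" and one_le_W: "1 \<le> W"
    and weighted: "weighted_graph n w W" and connected: "connected_graph n w"
begin

abbreviation d where "d \<equiv> wdeg n w"
abbreviation L where "L \<equiv> norm_laplacian n w"
abbreviation M where "M \<equiv> lazy_walk_mat n w"

lemma weight_sym: "i < n \<Longrightarrow> j < n \<Longrightarrow> w i j = w j i"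
  and weight_diag: "i < n \<Longrightarrow> w i i = 0"
  and weight_nonneg: "i < n \<Longrightarrow> j < n \<Longrightarrow> 0 \<le> w i j"
  and weight_le: "i < n \<Longrightarrow> j < n \<Longrightarrow> w i j \<le> W"
  and weight_ge_1: "i < n \<Longrightarrow> j < n \<Longrightarrow> w i j \<noteq> 0 \<Longrightarrow> 1 \<le> w i j"
  using weighted one_le_W unfolding weighted_graph_def by force+

lemma degree_ge_1: assumes i: "i < n" shows "1 \<le> d i"
proof -
  define j :: nat where "j = (if i = 0 then 1 else 0)"
  have j: "j < n" "j \<noteq> i" using two_le_n i unfolding j_def by auto
  have "(i, j) \<in> (graph_edges n w)\<^sup>*" using connected i j unfolding connected_graph_def by auto
  then obtain k where "(i, k) \<in> graph_edges n w" using j(2) by (metis converse_rtranclE)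
  hence k: "k < n" "w i k \<noteq> 0" unfolding graph_edges_def by auto
  have "w i k \<le> d i" unfolding wdeg_def
    by (rule member_le_sum) (use k i weight_nonneg in auto)
  with weight_ge_1[OF i k] show ?thesis by linarith
qed

lemma degree_pos: "i < n \<Longrightarrow> 0 < d i"
  using degree_ge_1 by force

lemma degree_le: assumes i: "i < n" shows "d i \<le> real n * W"
proof -
  have "d i \<le> (\<Sum>j<n. W)" unfolding wdeg_def by (rule sum_mono) (use weight_le i in auto)
  thus ?thesis by simp
qed

lemma volume_pos: "0 < (\<Sum>k<n. d k)"
  using two_le_n by (intro sum_pos) (auto simp: degree_pos lessThan_empty_iff)

lemma L_carrier: "L \<in> carrier_mat n n"
  unfolding norm_laplacian_def deg_inv_sqrt_mat_def deg_mat_def adj_mat_def carrier_mat_def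
  by (simp add: mat_diag_def)

lemma L_entry:
  assumes i: "i < n" and j: "j < n"
  shows "L $$ (i, j) = (if i = j then 1 else 0) - w i j / (sqrt (d i) * sqrt (d j))"
proof -
  have DA: "mat_diag n d - adj_mat n w \<in> carrier_mat n n" unfolding adj_mat_def by auto
  hence "mat_diag n (\<lambda>i. 1 / sqrt (d i)) * (mat_diag n d - adj_mat n w) \<in> carrier_mat n n"
    unfolding carrier_mat_def by (simp add: mat_diag_def)
  hence "L $$ (i, j) = (1 / sqrt (d i)) * ((mat_diag n d - adj_mat n w) $$ (i, j)) * (1 / sqrt (d j))"
    unfolding norm_laplacian_def deg_inv_sqrt_mat_def deg_mat_def
    by (subst mat_diag_mult_right, assumption, subst mat_diag_mult_left[OF DA]) (use i j in simp)
  also have "(mat_diag n d - adj_mat n w) $$ (i, j) = (if i = j then d i else 0) - w i j"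
    using i j unfolding adj_mat_def mat_diag_def by auto
  finally show ?thesis using degree_pos[OF i] weight_diag[OF i]
    by (cases "i = j") (auto simp: field_simps real_sqrt_mult[symmetric])
qed

lemma L_symmetric: "transpose_mat L = L"
  by (rule eq_matI) (use L_carrier in \<open>auto simp: L_entry weight_sym mult.commute\<close>)

lemma M_carrier: "M \<in> carrier_mat n n"
  unfolding lazy_walk_mat_def adj_mat_def deg_inv_mat_def carrier_mat_def by (simp add: mat_diag_def)

lemma M_mult_vec_index:
  assumes x: "x \<in> carrier_vec n" and v: "v < n"
  shows "(M *\<^sub>v x) $ v = x $ v / 2 + (\<Sum>j<n. w v j * x $ j / d j) / 2"
proof -
  have M_entry: "M $$ (v, j) = (if v = j then 1/2 else 0) + w v j / (2 * d j)" if j: "j < n" for j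
  proof -
    have "adj_mat n w \<in> carrier_mat n n" unfolding adj_mat_def by auto
    thus ?thesis unfolding lazy_walk_mat_def deg_inv_mat_def
      by (subst mat_diag_mult_right) (use v j in \<open>auto simp: adj_mat_def\<close>)
  qed
  have "(M *\<^sub>v x) $ v = (\<Sum>j<n. M $$ (v, j) * x $ j)"
    using M_carrier x v by (auto simp: scalar_prod_def atLeast0LessThan intro!: sum.cong)
  also have "\<dots> = (\<Sum>j<n. (if v = j then x $ j / 2 else 0) + w v j * x $ j / d j / 2)"
    by (intro sum.cong refl) (auto simp: M_entry v algebra_simps)
  also have "\<dots> = x $ v / 2 + (\<Sum>j<n. w v j * x $ j / d j) / 2"
    using v by (simp add: sum.distrib sum_divide_distrib)
  finally show ?thesis .
qed

definition L_form :: "(nat \<Rightarrow> real) \<Rightarrow> real" where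
  "L_form x = (\<Sum>k<n. x k * (\<Sum>l<n. L $$ (k, l) * x l))"

lemma weighted_square_sum:
  "(\<Sum>k<n. \<Sum>l<n. w k l * (y k)^2) = (\<Sum>k<n. d k * (y k)^2)"
  "(\<Sum>k<n. \<Sum>l<n. w k l * (y l)^2) = (\<Sum>k<n. d k * (y k)^2)"
proof -
  show sum_first: "(\<Sum>k<n. \<Sum>l<n. w k l * (y k)^2) = (\<Sum>k<n. d k * (y k)^2)"
    unfolding wdeg_def by (simp add: sum_distrib_right)
  have "(\<Sum>k<n. \<Sum>l<n. w k l * (y l)^2) = (\<Sum>l<n. \<Sum>k<n. w l k * (y l)^2)"
    by (subst sum.swap) (auto simp: weight_sym intro!: sum.cong)
  thus "(\<Sum>k<n. \<Sum>l<n. w k l * (y l)^2) = (\<Sum>k<n. d k * (y k)^2)" using sum_first by simp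
qed

lemma L_form_expand:
  "L_form x = (\<Sum>k<n. (x k)^2) - (\<Sum>k<n. \<Sum>l<n. w k l * (x k / sqrt (d k) * (x l / sqrt (d l))))"
proof -
  have "x k * (\<Sum>l<n. L $$ (k, l) * x l)
      = (x k)^2 - (\<Sum>l<n. w k l * (x k / sqrt (d k) * (x l / sqrt (d l))))" if k: "k < n" for k
  proof -
    have "(\<Sum>l<n. L $$ (k, l) * x l)
        = (\<Sum>l<n. (if k = l then x l else 0) - w k l * x l / (sqrt (d k) * sqrt (d l)))"
      by (intro sum.cong refl) (use k in \<open>auto simp: L_entry algebra_simps\<close>)
    also have "\<dots> = x k - (\<Sum>l<n. w k l * x l / (sqrt (d k) * sqrt (d l)))"
      using k by (simp add: sum_subtractf)
    finally have "x k * (\<Sum>l<n. L $$ (k, l) * x l)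
        = x k * (x k - (\<Sum>l<n. w k l * x l / (sqrt (d k) * sqrt (d l))))" by simp
    also have "\<dots> = (x k)^2 - (\<Sum>l<n. x k * (w k l * x l / (sqrt (d k) * sqrt (d l))))"
      by (simp only: power2_eq_square right_diff_distrib sum_distrib_left)
    also have "(\<Sum>l<n. x k * (w k l * x l / (sqrt (d k) * sqrt (d l))))
        = (\<Sum>l<n. w k l * (x k / sqrt (d k) * (x l / sqrt (d l))))"
      by (intro sum.cong refl) (simp add: field_simps)
    finally show ?thesis .
  qed
  thus ?thesis unfolding L_form_def by (simp add: sum_subtractf)
qed

lemma L_form_edge_sums:
  "L_form x = (\<Sum>k<n. \<Sum>l<n. w k l * (x k / sqrt (d k) - x l / sqrt (d l))^2) / 2"
  "2 * (\<Sum>k<n. (x k)^2) - L_form x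
     = (\<Sum>k<n. \<Sum>l<n. w k l * (x k / sqrt (d k) + x l / sqrt (d l))^2) / 2"
proof -
  define y where "y k = x k / sqrt (d k)" for k
  have "(\<Sum>k<n. d k * (y k)^2) = (\<Sum>k<n. (x k)^2)"
    by (intro sum.cong refl) (auto simp: y_def power_divide dest: degree_pos)
  note square_sums = weighted_square_sum[of y, unfolded this]
  have "w k l * (y k - y l)^2 = w k l * (y k)^2 + w k l * (y l)^2 - 2 * (w k l * (y k * y l))"
    "w k l * (y k + y l)^2 = w k l * (y k)^2 + w k l * (y l)^2 + 2 * (w k l * (y k * y l))" for k l
    by (simp_all add: power2_eq_square algebra_simps)
  hence "(\<Sum>k<n. \<Sum>l<n. w k l * (y k - y l)^2) = (\<Sum>k<n. \<Sum>l<n. w k l * (y k)^2)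
      + (\<Sum>k<n. \<Sum>l<n. w k l * (y l)^2) - 2 * (\<Sum>k<n. \<Sum>l<n. w k l * (y k * y l))"
    "(\<Sum>k<n. \<Sum>l<n. w k l * (y k + y l)^2) = (\<Sum>k<n. \<Sum>l<n. w k l * (y k)^2)
      + (\<Sum>k<n. \<Sum>l<n. w k l * (y l)^2) + 2 * (\<Sum>k<n. \<Sum>l<n. w k l * (y k * y l))"
    by (simp_all only: sum.distrib sum_subtractf sum_distrib_left)
  with square_sums L_form_expand[of x] show
    "L_form x = (\<Sum>k<n. \<Sum>l<n. w k l * (x k / sqrt (d k) - x l / sqrt (d l))^2) / 2"
    "2 * (\<Sum>k<n. (x k)^2) - L_form x
       = (\<Sum>k<n. \<Sum>l<n. w k l * (x k / sqrt (d k) + x l / sqrt (d l))^2) / 2"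
    unfolding y_def by linarith+
qed

lemma L_form_nonneg: "0 \<le> L_form x"
  unfolding L_form_edge_sums(1)
  by (intro divide_nonneg_pos sum_nonneg mult_nonneg_nonneg) (auto intro: weight_nonneg)

lemma L_form_le: "L_form x \<le> 2 * (\<Sum>k<n. (x k)^2)"
proof -
  have "0 \<le> (\<Sum>k<n. \<Sum>l<n. w k l * (x k / sqrt (d k) + x l / sqrt (d l))^2)"
    by (intro sum_nonneg mult_nonneg_nonneg) (auto intro: weight_nonneg)
  thus ?thesis using L_form_edge_sums(2)[of x] by linarith
qed

text \<open>By connectivity, the kernel of \<open>L\<close> is spanned by \<open>D\<^sup>1\<^sup>/\<^sup>2 \<one>\<close>.\<close>

lemma L_form_eq_0D:
  assumes "L_form x = 0" "k < n"
  shows "x k = (x 0 / sqrt (d 0)) * sqrt (d k)"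
proof -
  define y where "y k = x k / sqrt (d k)" for k
  define f where "f k l = w k l * (y k - y l)^2" for k l
  have f_nonneg: "0 \<le> f k l" if "k < n" "l < n" for k l
    unfolding f_def using that by (intro mult_nonneg_nonneg weight_nonneg) auto
  have "(\<Sum>k<n. \<Sum>l<n. f k l) = 0" using assms(1) unfolding L_form_edge_sums(1) y_def f_def by simp
  hence "(\<Sum>l<n. f k l) = 0" if "k < n" for k
    using that f_nonneg by (subst (asm) sum_nonneg_eq_0_iff) (auto intro: sum_nonneg)
  hence "f k l = 0" if "k < n" "l < n" for k l
    using that f_nonneg sum_nonneg_eq_0_iff[of "{..<n}" "f k"] by simp
  hence edge: "y k = y l" if "(k, l) \<in> graph_edges n w" for k l
    using that unfolding graph_edges_def f_def by auto
  have "(0, k) \<in> (graph_edges n w)\<^sup>*"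
    using connected assms(2) two_le_n unfolding connected_graph_def by auto
  hence "y k = y 0" by (induct rule: rtrancl_induct) (auto dest: edge)
  thus ?thesis using degree_pos[OF assms(2)] unfolding y_def by (simp add: field_simps)
qed

lemma L_sqrt_degree: assumes k: "k < n" shows "(\<Sum>l<n. L $$ (k, l) * sqrt (d l)) = 0"
proof -
  have "(\<Sum>l<n. L $$ (k, l) * sqrt (d l))
      = (\<Sum>l<n. (if k = l then sqrt (d l) else 0) - w k l / sqrt (d k))"
    by (intro sum.cong refl) (use k in \<open>auto simp: L_entry field_simps dest: degree_pos\<close>)
  also have "\<dots> = sqrt (d k) - d k / sqrt (d k)"
    using k by (simp add: sum_subtractf wdeg_def sum_divide_distrib)
  also have "\<dots> = 0" using degree_pos[OF k] by (simp add: field_simps)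
  finally show ?thesis .
qed

abbreviation nu :: "nat \<Rightarrow> real" where "nu i \<equiv> sorted_eigenvalues L ! i"

definition eigvecs :: "real mat" where
  "eigvecs = (SOME P. orthonormal_mat n P \<and> L * P = P * mat_diag n nu)"

definition eigvec :: "nat \<Rightarrow> nat \<Rightarrow> real" where
  "eigvec i k = eigvecs $$ (k, i)"

lemma eigvecs: "orthonormal_mat n eigvecs" "L * eigvecs = eigvecs * mat_diag n nu"
proof -
  have "\<exists>P. orthonormal_mat n P \<and> L * P = P * mat_diag n nu"
    by (rule real_symmetric_eigenbasis[OF L_carrier L_symmetric])
  from someI_ex[OF this] show "orthonormal_mat n eigvecs" "L * eigvecs = eigvecs * mat_diag n nu"
    unfolding eigvecs_def by auto
qed

lemma eigvec_inner:
  assumes "i < n" "j < n" shows "(\<Sum>k<n. eigvec i k * eigvec j k) = (if i = j then 1 else 0)"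
proof -
  note P = orthonormal_matD[OF eigvecs(1)]
  have "(transpose_mat eigvecs * eigvecs) $$ (i, j) = (\<Sum>k<n. eigvec i k * eigvec j k)"
    using P(1) assms by (auto simp: eigvec_def scalar_prod_def atLeast0LessThan intro!: sum.cong)
  thus ?thesis unfolding P(2) using assms by simp
qed

lemma eigvec_complete:
  assumes "k < n" "l < n" shows "(\<Sum>i<n. eigvec i k * eigvec i l) = (if k = l then 1 else 0)"
proof -
  note P = orthonormal_matD[OF eigvecs(1)]
  have "(eigvecs * transpose_mat eigvecs) $$ (k, l) = (\<Sum>i<n. eigvec i k * eigvec i l)"
    using P(1) assms by (auto simp: eigvec_def scalar_prod_def atLeast0LessThan intro!: sum.cong)
  thus ?thesis unfolding P(3) using assms by simp
qed

lemma L_eigvec: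
  assumes "i < n" "k < n" shows "(\<Sum>l<n. L $$ (k, l) * eigvec i l) = nu i * eigvec i k"
proof -
  note P = orthonormal_matD(1)[OF eigvecs(1)]
  have "(L * eigvecs) $$ (k, i) = (\<Sum>l<n. L $$ (k, l) * eigvec i l)"
    using P L_carrier assms by (auto simp: eigvec_def scalar_prod_def atLeast0LessThan intro!: sum.cong)
  moreover have "(eigvecs * mat_diag n nu) $$ (k, i) = nu i * eigvec i k"
    by (subst mat_diag_mult_right[OF P]) (use assms in \<open>auto simp: eigvec_def\<close>)
  ultimately show ?thesis unfolding eigvecs(2) by simp
qed

lemma eigvec_square_sum: "i < n \<Longrightarrow> (\<Sum>k<n. (eigvec i k)^2) = 1"
  using eigvec_inner[of i i] by (simp add: power2_eq_square)

lemma nu_eq_L_form: assumes i: "i < n" shows "nu i = L_form (eigvec i)"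
proof -
  have "L_form (eigvec i) = (\<Sum>k<n. nu i * (eigvec i k)^2)"
    unfolding L_form_def by (intro sum.cong refl) (simp add: L_eigvec i power2_eq_square)
  thus ?thesis using eigvec_square_sum[OF i] by (simp add: sum_distrib_left[symmetric])
qed

lemma nu_nonneg: "i < n \<Longrightarrow> 0 \<le> nu i"
  using nu_eq_L_form L_form_nonneg by simp

lemma nu_le_2: "i < n \<Longrightarrow> nu i \<le> 2"
  using nu_eq_L_form L_form_le[of "eigvec i"] eigvec_square_sum by simp

lemma nu_mono: "i \<le> j \<Longrightarrow> j < n \<Longrightarrow> nu i \<le> nu j"
  using sorted_eigenvalues_real_symmetric(2)[OF L_carrier L_symmetric]
  by (intro sorted_nth_mono) (auto simp: sorted_eigenvalues_def)

lemma abs_eigvec_le_1: assumes i: "i < n" and k: "k < n" shows "\<bar>eigvec i k\<bar> \<le> 1"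
proof -
  have "(eigvec i k)^2 \<le> (\<Sum>k<n. (eigvec i k)^2)"
    by (rule member_le_sum) (use k in auto)
  thus ?thesis using eigvec_square_sum[OF i] by (simp add: abs_square_le_1)
qed

lemma nu_mult_eigvec_sqrt_degree:
  assumes i: "i < n" shows "nu i * (\<Sum>k<n. eigvec i k * sqrt (d k)) = 0"
proof -
  have "nu i * (\<Sum>k<n. eigvec i k * sqrt (d k))
      = (\<Sum>k<n. (\<Sum>l<n. L $$ (k, l) * eigvec i l) * sqrt (d k))"
    unfolding sum_distrib_left by (intro sum.cong refl) (simp add: L_eigvec i)
  also have "\<dots> = (\<Sum>k<n. \<Sum>l<n. eigvec i l * (L $$ (l, k) * sqrt (d k)))"
    by (intro sum.cong refl)
      (auto simp: sum_distrib_right symmetric_matD[OF L_carrier L_symmetric] intro!: sum.cong)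
  also have "\<dots> = (\<Sum>l<n. eigvec i l * (\<Sum>k<n. L $$ (l, k) * sqrt (d k)))"
    by (subst sum.swap) (simp add: sum_distrib_left)
  also have "\<dots> = 0" by (simp add: L_sqrt_degree)
  finally show ?thesis .
qed

lemma nu_0: "nu 0 = 0"
proof -
  have "\<exists>i<n. nu i = 0"
  proof (rule ccontr)
    assume "\<not> ?thesis"
    hence orth: "(\<Sum>k<n. eigvec i k * sqrt (d k)) = 0" if "i < n" for i
      using nu_mult_eigvec_sqrt_degree[OF that] that by auto
    \<comment> \<open>Then \<open>D\<^sup>1\<^sup>/\<^sup>2 \<one>\<close> would be orthogonal to the whole eigenbasis.\<close>
    have "sqrt (d 0) = (\<Sum>k<n. sqrt (d k) * (\<Sum>i<n. eigvec i k * eigvec i 0))"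
      using two_le_n by (simp add: eigvec_complete if_distrib sum.delta' cong: if_cong)
    also have "\<dots> = (\<Sum>k<n. \<Sum>i<n. eigvec i 0 * (eigvec i k * sqrt (d k)))"
      by (simp add: sum_distrib_left algebra_simps)
    also have "\<dots> = (\<Sum>i<n. eigvec i 0 * (\<Sum>k<n. eigvec i k * sqrt (d k)))"
      by (subst sum.swap) (simp add: sum_distrib_left)
    finally show False using orth degree_pos[of 0] two_le_n by simp
  qed
  then obtain i where "i < n" "nu i = 0" by auto
  thus ?thesis using nu_mono[of 0 i] nu_nonneg[of 0] by simp
qed

lemma eigvec_null:
  assumes i: "i < n" and "nu i = 0"
  shows "\<exists>a. a^2 * (\<Sum>k<n. d k) = 1 \<and> (\<forall>k<n. eigvec i k = a * sqrt (d k))"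
proof -
  define a where "a = eigvec i 0 / sqrt (d 0)"
  have "L_form (eigvec i) = 0" using nu_eq_L_form[OF i] assms(2) by simp
  hence eigvec_eq: "\<forall>k<n. eigvec i k = a * sqrt (d k)"
    unfolding a_def using L_form_eq_0D by blast
  have "1 = (\<Sum>k<n. (eigvec i k)^2)" using eigvec_square_sum[OF i] by simp
  also have "\<dots> = (\<Sum>k<n. a^2 * d k)"
    by (intro sum.cong refl) (use eigvec_eq degree_pos in \<open>auto simp: power_mult_distrib less_imp_le\<close>)
  finally show ?thesis using eigvec_eq by (auto simp: sum_distrib_left)
qed

lemma nu_1_pos: "0 < nu 1"
proof (rule ccontr)
  assume "\<not> ?thesis"
  hence "nu 1 = 0" using nu_nonneg[of 1] two_le_n by simp
  with eigvec_null[of 1] two_le_n obtain b where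
    b: "b^2 * (\<Sum>k<n. d k) = 1" "\<forall>k<n. eigvec 1 k = b * sqrt (d k)" by auto
  from eigvec_null[of 0] nu_0 two_le_n obtain a where
    a: "a^2 * (\<Sum>k<n. d k) = 1" "\<forall>k<n. eigvec 0 k = a * sqrt (d k)" by auto
  have "0 = (\<Sum>k<n. eigvec 0 k * eigvec 1 k)" using eigvec_inner[of 0 1] two_le_n by simp
  also have "\<dots> = a * b * (\<Sum>k<n. d k)"
    unfolding sum_distrib_left
    by (intro sum.cong refl) (use a b degree_pos in \<open>auto simp: algebra_simps less_imp_le\<close>)
  finally have "a * b = 0" using volume_pos by simp
  thus False using a b by auto
qed

subsection \<open>Spectral decomposition of the lazy random walk\<close>

lemma L_mult_eigvec_sum:
  assumes v: "v < n"
  shows "(\<Sum>j<n. L $$ (v, j) * (\<Sum>i<n. a i * eigvec i j)) = (\<Sum>i<n. a i * nu i * eigvec i v)"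
proof -
  have "(\<Sum>j<n. L $$ (v, j) * (\<Sum>i<n. a i * eigvec i j))
      = (\<Sum>i<n. \<Sum>j<n. a i * (L $$ (v, j) * eigvec i j))"
    by (subst sum.swap) (simp add: sum_distrib_left algebra_simps)
  also have "\<dots> = (\<Sum>i<n. a i * nu i * eigvec i v)"
    by (intro sum.cong refl) (simp add: sum_distrib_left[symmetric] L_eigvec v)
  finally show ?thesis .
qed

text \<open>In matrix form: \<open>A D\<^sup>-\<^sup>1 D\<^sup>1\<^sup>/\<^sup>2 = D\<^sup>1\<^sup>/\<^sup>2 (I - L)\<close>.\<close>

lemma adj_deg_inv_sqrt_degree:
  assumes v: "v < n"
  shows "(\<Sum>j<n. w v j * (sqrt (d j) * h j) / d j)
    = sqrt (d v) * (h v - (\<Sum>j<n. L $$ (v, j) * h j))"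
proof -
  have "(\<Sum>j<n. L $$ (v, j) * h j)
      = (\<Sum>j<n. (if v = j then h j else 0) - w v j * h j / (sqrt (d v) * sqrt (d j)))"
    by (intro sum.cong refl) (use v in \<open>auto simp: L_entry algebra_simps\<close>)
  also have "\<dots> = h v - (\<Sum>j<n. w v j * h j / (sqrt (d v) * sqrt (d j)))"
    using v by (simp add: sum_subtractf)
  finally have "sqrt (d v) * (h v - (\<Sum>j<n. L $$ (v, j) * h j))
      = (\<Sum>j<n. sqrt (d v) * (w v j * h j / (sqrt (d v) * sqrt (d j))))"
    by (simp add: sum_distrib_left)
  also have "\<dots> = (\<Sum>j<n. w v j * (sqrt (d j) * h j) / d j)"
  proof (intro sum.cong refl)
    fix j assume "j \<in> {..<n}"
    hence "0 < sqrt (d j)" "0 < sqrt (d v)" using degree_pos v by auto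
    thus "sqrt (d v) * (w v j * h j / (sqrt (d v) * sqrt (d j)))
        = w v j * (sqrt (d j) * h j) / d j"
      by (simp add: field_simps)
  qed
  finally show ?thesis by simp
qed

definition walk_distr :: "nat \<Rightarrow> nat \<Rightarrow> real vec" where
  "walk_distr u t = (M ^\<^sub>m t) *\<^sub>v unit_vec n u"

lemma walk_distr_carrier: "walk_distr u t \<in> carrier_vec n"
  unfolding walk_distr_def using M_carrier by (auto intro!: carrier_vecI)

lemma walk_distr_0: "walk_distr u 0 = unit_vec n u"
  unfolding walk_distr_def using M_carrier by auto

lemma walk_distr_Suc_index:
  assumes v: "v < n"
  shows "walk_distr u (Suc t) $ v
    = walk_distr u t $ v / 2 + (\<Sum>j<n. w v j * walk_distr u t $ j / d j) / 2"
proof -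
  have "walk_distr u (Suc t) = M *\<^sub>v walk_distr u t"
    unfolding walk_distr_def pow_mat_Suc_left[OF M_carrier]
    by (rule assoc_mult_mat_vec) (use M_carrier in auto)
  thus ?thesis using M_mult_vec_index[OF walk_distr_carrier v] by simp
qed

lemma walk_distr_nonneg: "u < n \<Longrightarrow> v < n \<Longrightarrow> 0 \<le> walk_distr u t $ v"
proof (induct t arbitrary: v)
  case 0 thus ?case unfolding walk_distr_0 by simp
next
  case (Suc t)
  have "0 \<le> (\<Sum>j<n. w v j * walk_distr u t $ j / d j)"
    by (intro sum_nonneg divide_nonneg_nonneg mult_nonneg_nonneg)
      (use Suc weight_nonneg degree_pos in \<open>auto intro: less_imp_le\<close>)
  thus ?case unfolding walk_distr_Suc_index[OF Suc(3)] using Suc(1)[OF Suc(2,3)] by simp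
qed

lemma walk_distr_sum: "u < n \<Longrightarrow> (\<Sum>v<n. walk_distr u t $ v) = 1"
proof (induct t)
  case 0 thus ?case unfolding walk_distr_0 by (simp add: sum.delta)
next
  case (Suc t)
  have "(\<Sum>v<n. \<Sum>j<n. w v j * walk_distr u t $ j / d j)
      = (\<Sum>j<n. (\<Sum>v<n. w j v) * walk_distr u t $ j / d j)"
    by (subst sum.swap) (auto simp: sum_distrib_right sum_divide_distrib weight_sym intro!: sum.cong)
  also have "\<dots> = (\<Sum>j<n. walk_distr u t $ j)"
    by (intro sum.cong refl) (auto simp: wdeg_def[symmetric] dest: degree_pos)
  finally show ?case
    using Suc by (simp add: walk_distr_Suc_index sum.distrib sum_divide_distrib[symmetric])
qed

definition mu :: "nat \<Rightarrow> real" where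
  "mu i = 1 - nu i / 2"

lemma walk_distr_spectral:
  assumes u: "u < n"
  shows "v < n \<Longrightarrow> walk_distr u t $ v
    = sqrt (d v) * (\<Sum>i<n. mu i ^ t * (eigvec i u / sqrt (d u)) * eigvec i v)"
proof (induct t arbitrary: v)
  case 0
  have "(\<Sum>i<n. mu i ^ 0 * (eigvec i u / sqrt (d u)) * eigvec i v)
      = (\<Sum>i<n. eigvec i u * eigvec i v) / sqrt (d u)"
    by (simp add: sum_divide_distrib)
  also have "\<dots> = (if u = v then 1 / sqrt (d u) else 0)" using eigvec_complete[OF u 0] by simp
  finally show ?case unfolding walk_distr_0 using 0 u degree_pos[OF u] by auto
next
  case (Suc t v)
  define h where "h j = (\<Sum>i<n. mu i ^ t * (eigvec i u / sqrt (d u)) * eigvec i j)" for j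
  have IH: "walk_distr u t $ j = sqrt (d j) * h j" if "j < n" for j
    using Suc(1)[OF that] unfolding h_def .
  have "(\<Sum>j<n. w v j * walk_distr u t $ j / d j) = (\<Sum>j<n. w v j * (sqrt (d j) * h j) / d j)"
    by (intro sum.cong refl) (simp add: IH)
  also have "\<dots> = sqrt (d v) * (h v - (\<Sum>j<n. L $$ (v, j) * h j))"
    by (rule adj_deg_inv_sqrt_degree[OF Suc(2)])
  also have "(\<Sum>j<n. L $$ (v, j) * h j)
      = (\<Sum>i<n. mu i ^ t * (eigvec i u / sqrt (d u)) * nu i * eigvec i v)"
    unfolding h_def by (rule L_mult_eigvec_sum[OF Suc(2)])
  finally have "walk_distr u (Suc t) $ v = sqrt (d v)
      * (h v - (\<Sum>i<n. mu i ^ t * (eigvec i u / sqrt (d u)) * nu i * eigvec i v) / 2)"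
    unfolding walk_distr_Suc_index[OF Suc(2)] IH[OF Suc(2)] by (simp add: algebra_simps)
  also have "h v - (\<Sum>i<n. mu i ^ t * (eigvec i u / sqrt (d u)) * nu i * eigvec i v) / 2
      = (\<Sum>i<n. mu i ^ Suc t * (eigvec i u / sqrt (d u)) * eigvec i v)"
    unfolding h_def mu_def by (simp add: sum_subtractf sum_divide_distrib[symmetric] algebra_simps)
  finally show ?case .
qed

text \<open>The null eigenvector contributes exactly the stationary distribution.\<close>

lemma sigma_term_spectral:
  assumes u: "u < n" and v: "v < n"
  shows "sigma_term n w u t $ v
    = sqrt (d v) * (\<Sum>i\<in>{1..<n}. mu i ^ t * (eigvec i u / sqrt (d u)) * eigvec i v)"
proof -
  from eigvec_null[of 0] nu_0 two_le_n obtain a where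
    a: "a^2 * (\<Sum>k<n. d k) = 1" "\<forall>k<n. eigvec 0 k = a * sqrt (d k)" by auto
  have "mu 0 ^ t * (eigvec 0 u / sqrt (d u)) * eigvec 0 v = a^2 * sqrt (d v)"
    using a(2) u v degree_pos[OF u] by (simp add: mu_def nu_0 power2_eq_square)
  moreover have "sqrt (d v) * (a^2 * sqrt (d v)) = d v / (\<Sum>k<n. d k)"
    using a(1) degree_pos[OF v] volume_pos by (simp add: field_simps)
  moreover have "(\<Sum>i<n. mu i ^ t * (eigvec i u / sqrt (d u)) * eigvec i v)
      = mu 0 ^ t * (eigvec 0 u / sqrt (d u)) * eigvec 0 v
        + (\<Sum>i\<in>{1..<n}. mu i ^ t * (eigvec i u / sqrt (d u)) * eigvec i v)"
    using two_le_n by (simp add: lessThan_atLeast0 sum.atLeast_Suc_lessThan)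
  moreover have "sigma_term n w u t $ v = walk_distr u t $ v - d v / (\<Sum>k<n. d k)"
    using v unfolding sigma_term_def walk_distr_def[symmetric] stat_dist_def by simp
  ultimately show ?thesis unfolding walk_distr_spectral[OF u v] by (simp add: algebra_simps)
qed

lemma mu_1_bounds: "0 \<le> mu 1" "mu 1 < 1"
  using nu_le_2[of 1] nu_1_pos two_le_n unfolding mu_def by auto

lemma mu_bounds: "1 \<le> i \<Longrightarrow> i < n \<Longrightarrow> 0 \<le> mu i \<and> mu i \<le> mu 1"
  using nu_le_2[of i] nu_mono[of 1 i] unfolding mu_def by auto

lemma abs_spectral_summand_le:
  assumes i: "1 \<le> i" "i < n" and u: "u < n" and v: "v < n"
  shows "\<bar>mu i ^ t * (eigvec i u / sqrt (d u)) * eigvec i v\<bar> \<le> mu 1 ^ t"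
proof -
  have sqrt_du: "1 \<le> sqrt (d u)" using degree_ge_1[OF u] by simp
  have "\<bar>mu i ^ t\<bar> = mu i ^ t" using mu_bounds[OF i] by simp
  also have "\<dots> \<le> mu 1 ^ t" using mu_bounds[OF i] by (intro power_mono) auto
  finally have mu_le: "\<bar>mu i ^ t\<bar> \<le> mu 1 ^ t" .
  have "\<bar>eigvec i u / sqrt (d u)\<bar> = \<bar>eigvec i u\<bar> / sqrt (d u)"
    using sqrt_du by (simp add: abs_divide)
  also have "\<dots> \<le> 1"
  proof (subst divide_le_eq_1_pos)
    show "\<bar>eigvec i u\<bar> \<le> sqrt (d u)" using abs_eigvec_le_1[OF i(2) u] sqrt_du by linarith
  qed (use sqrt_du in simp)
  finally have "\<bar>mu i ^ t\<bar> * \<bar>eigvec i u / sqrt (d u)\<bar> \<le> mu 1 ^ t * 1"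
    using mu_le by (intro mult_mono) auto
  hence "\<bar>mu i ^ t\<bar> * \<bar>eigvec i u / sqrt (d u)\<bar> * \<bar>eigvec i v\<bar> \<le> mu 1 ^ t * 1 * 1"
    by (rule mult_mono[OF _ abs_eigvec_le_1[OF i(2) v]]) (use mu_1_bounds(1) in auto)
  thus ?thesis by (simp add: abs_mult)
qed

lemma sqrt_degree_le: assumes v: "v < n" shows "sqrt (d v) \<le> real n * W"
proof -
  have "d v \<le> (d v)^2"
    using mult_right_mono[of 1 "d v" "d v"] degree_ge_1[OF v] by (simp add: power2_eq_square)
  hence "sqrt (d v) \<le> d v" using degree_ge_1[OF v] by (intro real_le_lsqrt) auto
  thus ?thesis using degree_le[OF v] by linarith
qed

lemma abs_sigma_term_le:
  assumes u: "u < n" and v: "v < n"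
  shows "\<bar>sigma_term n w u t $ v\<bar> \<le> real n * real n * W * mu 1 ^ t"
proof -
  have "\<bar>\<Sum>i\<in>{1..<n}. mu i ^ t * (eigvec i u / sqrt (d u)) * eigvec i v\<bar>
      \<le> (\<Sum>i\<in>{1..<n}. mu 1 ^ t)"
    by (rule order.trans[OF sum_abs sum_mono]) (rule abs_spectral_summand_le, use u v in auto)
  also have "\<dots> \<le> real n * mu 1 ^ t" using mu_1_bounds(1) by (simp add: mult_right_mono)
  finally have "sqrt (d v) * \<bar>\<Sum>i\<in>{1..<n}. mu i ^ t * (eigvec i u / sqrt (d u)) * eigvec i v\<bar>
      \<le> (real n * W) * (real n * mu 1 ^ t)"
    using sqrt_degree_le[OF v] one_le_W by (intro mult_mono) auto
  thus ?thesis
    unfolding sigma_term_spectral[OF u v] abs_mult using degree_pos[OF v] by (simp add: algebra_simps)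
qed

lemma norm1_sigma_term_le_2:
  assumes u: "u < n" shows "(\<Sum>v<n. \<bar>sigma_term n w u t $ v\<bar>) \<le> 2"
proof -
  have "(\<Sum>v<n. \<bar>sigma_term n w u t $ v\<bar>) \<le> (\<Sum>v<n. walk_distr u t $ v + d v / (\<Sum>k<n. d k))"
  proof (rule sum_mono)
    fix v assume "v \<in> {..<n}"
    hence "0 \<le> walk_distr u t $ v" "0 \<le> d v / (\<Sum>k<n. d k)"
      using walk_distr_nonneg[OF u] degree_pos volume_pos by (auto intro: less_imp_le)
    thus "\<bar>sigma_term n w u t $ v\<bar> \<le> walk_distr u t $ v + d v / (\<Sum>k<n. d k)"
      using \<open>v \<in> {..<n}\<close> unfolding sigma_term_def walk_distr_def[symmetric] stat_dist_def
      by (simp add: abs_le_iff)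
  qed
  also have "\<dots> = 2"
    using walk_distr_sum[OF u] volume_pos by (simp add: sum.distrib sum_divide_distrib[symmetric])
  finally show ?thesis .
qed

lemma summable_abs_sigma_term:
  assumes u: "u < n" and v: "v < n" shows "summable (\<lambda>t. \<bar>sigma_term n w u t $ v\<bar>)"
proof (rule summable_comparison_test'[of "\<lambda>t. real n * real n * W * mu 1 ^ t" 0])
  show "summable (\<lambda>t. real n * real n * W * mu 1 ^ t)"
    using mu_1_bounds by (intro summable_mult summable_geometric) simp
qed (use abs_sigma_term_le[OF u v] in simp)

lemma size_bounds:
  "1 / 2 \<le> ln (real n * W)" "1 \<le> real n ^ 3 * W" "ln (real n ^ 3 * W) \<le> 3 * ln (real n * W)"
proof -
  have nW: "2 \<le> real n * W" using mult_mono[of 2 "real n" 1 W] two_le_n one_le_W by simp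
  have "ln (1 / 2 :: real) \<le> 1 / 2 - 1" by (rule ln_le_minus_one) simp
  hence "1 / 2 \<le> ln (2 :: real)" by (simp add: ln_div)
  also have "\<dots> \<le> ln (real n * W)" using nW by simp
  finally show "1 / 2 \<le> ln (real n * W)" .
  have "1 * W \<le> real n ^ 3 * W" using two_le_n one_le_W by (intro mult_right_mono) auto
  thus n3W: "1 \<le> real n ^ 3 * W" using one_le_W by linarith
  have "W \<le> W ^ 3" using one_le_W by (simp add: power_increasing[of 1 3 W, simplified])
  hence "real n ^ 3 * W \<le> (real n * W) ^ 3" by (simp add: power_mult_distrib mult_left_mono)
  hence "ln (real n ^ 3 * W) \<le> ln ((real n * W) ^ 3)" using n3W by (intro ln_mono) auto
  thus "ln (real n ^ 3 * W) \<le> 3 * ln (real n * W)" using nW by (simp add: ln_realpow)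
qed

lemma norm1_sigma_vec_le_series:
  assumes u: "u < n"
  shows "norm1_vec (sigma_vec n w u) \<le> (\<Sum>t. \<Sum>v<n. \<bar>sigma_term n w u t $ v\<bar>) / 2"
proof -
  have "norm1_vec (sigma_vec n w u) = (\<Sum>v<n. \<bar>\<Sum>t. sigma_term n w u t $ v\<bar> / 2)"
    unfolding norm1_vec_def sigma_vec_def by (simp add: abs_mult)
  also have "\<dots> \<le> (\<Sum>v<n. (\<Sum>t. \<bar>sigma_term n w u t $ v\<bar>) / 2)"
    by (rule sum_mono, rule divide_right_mono, rule summable_rabs)
      (auto intro: summable_abs_sigma_term[OF u])
  also have "\<dots> = (\<Sum>t. \<Sum>v<n. \<bar>sigma_term n w u t $ v\<bar>) / 2"
    by (subst suminf_sum) (auto simp: sum_divide_distrib summable_abs_sigma_term[OF u])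
  finally show ?thesis .
qed

lemma norm1_sigma_vec_le:
  assumes u: "u < n"
  shows "norm1_vec (sigma_vec n w u) \<le> 12 * (1 / nu 1) * ln (real n * W)"
proof -
  define a where "a t = (\<Sum>v<n. \<bar>sigma_term n w u t $ v\<bar>)" for t
  define K where "K = real n ^ 3 * W"
  define T where "T = nat \<lceil>2 * ln K / nu 1\<rceil>"
  let ?lnW = "ln (real n * W)" and ?\<nu> = "nu 1"
  have \<nu>: "0 < ?\<nu>" "?\<nu> \<le> 2" using nu_1_pos nu_le_2[of 1] two_le_n by auto
  have K: "1 \<le> K" "ln K \<le> 3 * ?lnW" using size_bounds unfolding K_def by auto
  have "a t \<le> K * mu 1 ^ t" for t
  proof -
    have "a t \<le> (\<Sum>v<n. real n * real n * W * mu 1 ^ t)"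
      unfolding a_def by (rule sum_mono) (rule abs_sigma_term_le[OF u], simp)
    thus ?thesis unfolding K_def by (simp add: power3_eq_cube algebra_simps)
  qed
  hence "suminf a \<le> 2 * real T + K * mu 1 ^ T / (1 - mu 1)"
    using norm1_sigma_term_le_2[OF u] summable_abs_sigma_term[OF u] mu_1_bounds unfolding a_def
    by (intro suminf_le_split_geometric summable_sum) auto
  also have "K * mu 1 ^ T \<le> 1"
    using contraction_threshold[OF \<nu> K(1)] unfolding T_def mu_def .
  hence "K * mu 1 ^ T / (1 - mu 1) \<le> 2 / ?\<nu>" using \<nu> by (simp add: mu_def field_simps)
  moreover have "real T \<le> 2 * ln K / ?\<nu> + 1"
    using K(1) \<nu> ceiling_correct[of "2 * ln K / ?\<nu>"] unfolding T_def by (simp add: of_nat_nat)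
  moreover have "ln K / ?\<nu> \<le> 3 * (?lnW / ?\<nu>)" "2 \<le> 8 * (?lnW / ?\<nu>)" "2 / ?\<nu> \<le> 4 * (?lnW / ?\<nu>)"
    using K size_bounds(1) \<nu> by (simp_all add: field_simps)
  ultimately have "suminf a \<le> 24 * (?lnW / ?\<nu>)" by linarith
  thus ?thesis using norm1_sigma_vec_le_series[OF u] unfolding a_def by simp
qed

end

theorem lemma3p5:
  "\<exists>C::real. \<forall>(n::nat) (w::nat \<Rightarrow> nat \<Rightarrow> real) (W::real) (u::nat).
     2 \<le> n \<longrightarrow> 1 \<le> W \<longrightarrow> weighted_graph n w W \<longrightarrow> connected_graph n w \<longrightarrow> u < n \<longrightarrow>
       (\<forall>v<n. summable (\<lambda>t. sigma_term n w u t $ v)) \<and>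
       norm1_vec (sigma_vec n w u)
         \<le> C * (1 / second_smallest_eigenvalue (norm_laplacian n w)) * ln (real n * W)"
proof (intro exI[of _ 12] allI impI conjI)
  fix n w W u
  assume "2 \<le> n" "1 \<le> W" "weighted_graph n w W" "connected_graph n w" and u: "u < n"
  then interpret connected_weighted_graph n w W by unfold_locales
  show "summable (\<lambda>t. sigma_term n w u t $ v)" if "v < n" for v
    by (rule summable_rabs_cancel[OF summable_abs_sigma_term[OF u that]])
  show "norm1_vec (sigma_vec n w u)
      \<le> 12 * (1 / second_smallest_eigenvalue (norm_laplacian n w)) * ln (real n * W)"
    using norm1_sigma_vec_le[OF u] unfolding second_smallest_eigenvalue_def .
qed

end
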